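(* Let $\gamma: I \to \mathbb{R}^3$ be a unit speed curve with arc-length parameter $s$, Frenet frame $\{T,N,B\}$, curvature $\kappa$ and torsion $\tau$. Let $u,v,w: I \to \mathbb{R}$ be differentiable functions with $u^2+v^2+w^2=1$, put $V = uT + vN + wB$, let $\lambda: I \to \mathbb{R}$ be a differentiable function, and let $\beta(s) = \int_0^s V(t)\,dt + \lambda(s)N(s)$, assumed to be a regular curve with Frenet frame $\{\overline{T},\overline{N},\overline{B}\}$. Then $\gamma$ is a $V$-Mannheim curve (i.e. $\overline{B}(s) = \epsilon N(s)$ with $\epsilon = \pm 1$ for all $s$) if and only if $$u\kappa - w\tau = \lambda(\kappa^2+\tau^2) \quad\text{and}\quad \lambda(s) = -\int v(s)\,ds \ \ (\text{i.e. } \lambda' = -v) \text{ on } I.$$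
   Context: Frenet equations: $T' = \kappa N$, $N' = -\kappa T + \tau B$, $B' = -\tau N$. Definition (from the paper): with $\gamma$, $V$, $\lambda$, $\beta$ as in the claim, $\gamma$ is called a $V$-Mannheim curve and $\beta$ its $V$-Mannheim partner curve if the principal normal $N$ of $\gamma$ and the binormal $\overline{B}$ of $\beta$ are linearly dependent at corresponding points, i.e. $\overline{B} = \epsilon N$, $\epsilon = \pm 1$. It is assumed that $\beta$ is regular with nonvanishing curvature so that its Frenet frame is defined. *)

theory Defs
  imports "HOL-Analysis.Analysis"
begin

text \<open>Oriented integral from a to b (so that the integral from 0 to s makes sense for s < 0).\<close>
definition oint :: "real \<Rightarrow> real \<Rightarrow> (real \<Rightarrow> real^3) \<Rightarrow> real^3" where
  "oint a b f = (if a \<le> b then integral {a..b} f else - integral {b..a} f)"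

definition frenet_binormal :: "(real \<Rightarrow> real^3) \<Rightarrow> real \<Rightarrow> real^3" where
  "frenet_binormal c t =
     (let d1 = vector_derivative c (at t);
          d2 = vector_derivative (\<lambda>s. vector_derivative c (at s)) (at t)
      in (1 / norm (cross3 d1 d2)) *\<^sub>R cross3 d1 d2)"

end

theory Submission
  imports Defs
begin

text \<open>Differentiating \<beta> with the Frenet equations gives
  \<beta>' = (u - \<lambda>\<kappa>) T + (v + \<lambda>') N + (w + \<lambda>\<tau>) B.
  The binormal of \<beta> is the normalised cross product of \<beta>' and \<beta>'', so it is \<plusminus>N exactly
  when N is orthogonal to both \<beta>' and \<beta>''. Orthogonality to \<beta>' says \<lambda>' = -v. Once
  \<beta>' \<bullet> N vanishes identically, differentiating it gives
  \<beta>'' \<bullet> N = - \<beta>' \<bullet> N' = \<kappa>(u - \<lambda>\<kappa>) - \<tau>(w + \<lambda>\<tau>),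
  whose vanishing is u\<kappa> - w\<tau> = \<lambda>(\<kappa>^2 + \<tau>^2).\<close>

lemma has_real_derivative_iff_deriv_eq:
  fixes f :: "real \<Rightarrow> real"
  assumes "f differentiable (at x)"
  shows "(f has_real_derivative d) (at x) \<longleftrightarrow> deriv f x = d"
  using assms by (metis DERIV_deriv_iff_real_differentiable DERIV_imp_deriv)

lemma oint_eq_integral_diff:
  fixes V :: "real \<Rightarrow> real^3"
  assumes "V integrable_on {a..b}" "0 \<in> {a..b}" "t \<in> {a..b}"
  shows "oint 0 t V = integral {a..t} V - integral {a..0} V"
proof (cases "0 \<le> t")
  case True
  have "V integrable_on {a..t}"
    by (rule integrable_on_subinterval[OF assms(1)]) (use assms in auto)
  then have "integral {a..0} V + integral {0..t} V = integral {a..t} V"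
    using assms True Henstock_Kurzweil_Integration.integral_combine[of a 0 t V] by simp
  then show ?thesis
    using True by (simp add: oint_def algebra_simps)
next
  case False
  have "V integrable_on {a..0}"
    by (rule integrable_on_subinterval[OF assms(1)]) (use assms in auto)
  then have "integral {a..t} V + integral {t..0} V = integral {a..0} V"
    using assms False Henstock_Kurzweil_Integration.integral_combine[of a t 0 V] by simp
  then show ?thesis
    using False by (simp add: oint_def algebra_simps)
qed

lemma oint_has_vector_derivative:
  fixes V :: "real \<Rightarrow> real^3"
  assumes I: "open I" "is_interval I" "0 \<in> I" and V: "continuous_on I V" and s: "s \<in> I"
  shows "((\<lambda>t. oint 0 t V) has_vector_derivative V s) (at s)"
proof -
  \<comment> \<open>On an interval [a, b] \<subseteq> I around 0 and s, oint 0 t V differs from the integral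
    from a to t by a constant.\<close>
  obtain e where e: "e > 0" "ball s e \<subseteq> I"
    using I(1) s open_contains_ball by blast
  define a where "a = min 0 (s - e/2)"
  define b where "b = max 0 (s + e/2)"
  have "s - e/2 \<in> I" "s + e/2 \<in> I"
    using e by (auto intro!: subsetD[OF e(2)] simp: dist_real_def)
  then have "a \<in> I" "b \<in> I"
    using I(3) by (simp_all add: a_def b_def min_def max_def)
  then have "{a..b} \<subseteq> I"
    using I(2) unfolding is_interval_1 by (meson atLeastAtMost_iff subsetI)
  then have Vab: "continuous_on {a..b} V"
    using V continuous_on_subset by blast
  have s_ab: "s \<in> {a<..<b}" and "0 \<in> {a..b}"
    using e by (auto simp: a_def b_def)
  have "((\<lambda>t. integral {a..t} V) has_vector_derivative V s) (at s within {a..b})"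
    using s_ab by (intro integral_has_vector_derivative[OF Vab]) simp
  then have "((\<lambda>t. integral {a..t} V) has_vector_derivative V s) (at s)"
    using at_within_interior[of s "{a..b}"] s_ab by simp
  then have "((\<lambda>t. integral {a..t} V - integral {a..0} V) has_vector_derivative V s) (at s)"
    using has_vector_derivative_diff[OF _ has_vector_derivative_const] by fastforce
  moreover have "integral {a..t} V - integral {a..0} V = oint 0 t V" if "t \<in> {a<..<b}" for t
    using oint_eq_integral_diff[OF integrable_continuous_interval[OF Vab] \<open>0 \<in> {a..b}\<close>] that
    by simp
  ultimately show ?thesis
    by (rule has_vector_derivative_transform_within_open[OF _ open_greaterThanLessThan s_ab])
qed

lemma orthogonal_on_imp_inner_derivative_eq_0:
  fixes f g :: "real \<Rightarrow> 'a::real_inner"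
  assumes "open S" "s \<in> S" "\<forall>t\<in>S. f t \<bullet> g t = 0"
    and f: "(f has_vector_derivative f') (at s)" and g: "(g has_vector_derivative g') (at s)"
  shows "f' \<bullet> g s + f s \<bullet> g' = 0"
proof -
  have "((\<lambda>t. f t \<bullet> g t) has_vector_derivative f s \<bullet> g' + f' \<bullet> g s) (at s)"
    by (rule bounded_bilinear.has_vector_derivative[OF bounded_bilinear_inner f g])
  moreover have "((\<lambda>t. f t \<bullet> g t) has_vector_derivative 0) (at s)"
    by (rule has_vector_derivative_transform_within_open[of "\<lambda>_. 0"]) (use assms in auto)
  ultimately show ?thesis
    using vector_derivative_unique_at by (metis add.commute)
qed

lemma sgn_cross3_eq_pm_iff:
  fixes x y n :: "real^3"
  assumes n: "norm n = 1" and xy: "cross3 x y \<noteq> 0"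
  shows "(sgn (cross3 x y) = n \<or> sgn (cross3 x y) = - n) \<longleftrightarrow> x \<bullet> n = 0 \<and> y \<bullet> n = 0"
proof
  assume "sgn (cross3 x y) = n \<or> sgn (cross3 x y) = - n"
  moreover have "x \<bullet> sgn (cross3 x y) = 0" "y \<bullet> sgn (cross3 x y) = 0"
    by (simp_all add: sgn_div_norm dot_cross_self inner_commute[of y])
  ultimately show "x \<bullet> n = 0 \<and> y \<bullet> n = 0"
    by auto
next
  assume orth: "x \<bullet> n = 0 \<and> y \<bullet> n = 0"
  define c where "c = cross3 x y"
  have "cross3 c n = (x \<bullet> n) *\<^sub>R y - (y \<bullet> n) *\<^sub>R x"
    unfolding c_def by (simp add: cross3_simps forall_3)
  moreover have "cross3 n (cross3 c n) = (n \<bullet> n) *\<^sub>R c - (n \<bullet> c) *\<^sub>R n"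
    by (simp add: cross3_simps forall_3)
  ultimately have c_n: "c = (n \<bullet> c) *\<^sub>R n"
    using orth n by (simp add: power2_norm_eq_inner[symmetric])
  have "sgn n = n"
    using n by (simp add: sgn_div_norm)
  then have "sgn c = sgn (n \<bullet> c) *\<^sub>R n"
    by (subst c_n) (simp only: sgn_scaleR)
  moreover have "n \<bullet> c \<noteq> 0"
    using xy c_n c_def by auto
  ultimately show "sgn (cross3 x y) = n \<or> sgn (cross3 x y) = - n"
    unfolding c_def by (auto simp: sgn_real_def)
qed

lemma frenet_binormal_eq_sgn:
  "frenet_binormal c t
     = sgn (cross3 (vector_derivative c (at t))
                   (vector_derivative (\<lambda>s. vector_derivative c (at s)) (at t)))"
  by (simp add: frenet_binormal_def sgn_div_norm Let_def divide_inverse)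

locale frenet_frame =
  fixes I :: "real set" and T N B :: "real \<Rightarrow> real^3" and \<kappa> \<tau> :: "real \<Rightarrow> real"
  assumes open_I: "open I"
    and unit_T: "\<And>s. s \<in> I \<Longrightarrow> norm (T s) = 1"
    and unit_N: "\<And>s. s \<in> I \<Longrightarrow> norm (N s) = 1"
    and orthogonal_TN: "\<And>s. s \<in> I \<Longrightarrow> T s \<bullet> N s = 0"
    and B_eq_cross3: "\<And>s. s \<in> I \<Longrightarrow> B s = cross3 (T s) (N s)"
    and T_derivative: "\<And>s. s \<in> I \<Longrightarrow> (T has_vector_derivative (\<kappa> s *\<^sub>R N s)) (at s)"
    and N_derivative: "\<And>s. s \<in> I \<Longrightarrow>
                         (N has_vector_derivative (- \<kappa> s *\<^sub>R T s + \<tau> s *\<^sub>R B s)) (at s)"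
    and B_derivative: "\<And>s. s \<in> I \<Longrightarrow> (B has_vector_derivative (- \<tau> s *\<^sub>R N s)) (at s)"
begin

lemma inner_frame:
  assumes "s \<in> I"
  shows "T s \<bullet> T s = 1" "N s \<bullet> N s = 1" "B s \<bullet> B s = 1"
    and "T s \<bullet> N s = 0" "N s \<bullet> T s = 0" "T s \<bullet> B s = 0" "B s \<bullet> T s = 0"
    and "N s \<bullet> B s = 0" "B s \<bullet> N s = 0"
proof -
  show "T s \<bullet> T s = 1" "N s \<bullet> N s = 1"
    using unit_T unit_N assms by (simp_all flip: power2_norm_eq_inner)
  have "(norm (B s))\<^sup>2 = 1"
    using norm_cross_dot[of "T s" "N s"] unit_T unit_N orthogonal_TN B_eq_cross3 assms by simp
  then show "B s \<bullet> B s = 1"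
    by (simp add: power2_norm_eq_inner)
  show "T s \<bullet> N s = 0" "N s \<bullet> T s = 0"
    using orthogonal_TN assms by (simp_all add: inner_commute)
  show "T s \<bullet> B s = 0" "B s \<bullet> T s = 0" "N s \<bullet> B s = 0" "B s \<bullet> N s = 0"
    using B_eq_cross3[OF assms] dot_cross_self inner_commute by metis+
qed

lemma inner_frame_combination:
  assumes "s \<in> I"
  shows "(a *\<^sub>R T s + b *\<^sub>R N s + c *\<^sub>R B s) \<bullet> N s = b"
    and "(a *\<^sub>R T s + b *\<^sub>R N s + c *\<^sub>R B s) \<bullet> (- \<kappa> s *\<^sub>R T s + \<tau> s *\<^sub>R B s)
           = \<tau> s * c - \<kappa> s * a"
  using inner_frame[OF assms] by (simp_all add: inner_add_left inner_add_right algebra_simps)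

lemma continuous_on_frame_combination:
  assumes "\<And>s. s \<in> I \<Longrightarrow> isCont a s" "\<And>s. s \<in> I \<Longrightarrow> isCont b s"
    "\<And>s. s \<in> I \<Longrightarrow> isCont c s"
  shows "continuous_on I (\<lambda>s. a s *\<^sub>R T s + b s *\<^sub>R N s + c s *\<^sub>R B s)"
proof (intro continuous_at_imp_continuous_on ballI)
  fix s assume s: "s \<in> I"
  have "isCont T s" "isCont N s" "isCont B s"
    using T_derivative[OF s] N_derivative[OF s] B_derivative[OF s]
    by (auto intro: has_vector_derivative_continuous)
  then show "isCont (\<lambda>s. a s *\<^sub>R T s + b s *\<^sub>R N s + c s *\<^sub>R B s) s"
    using assms s by (intro continuous_intros) auto
qed

lemma normal_component_of_derivative:
  assumes "\<forall>t\<in>I. X t \<bullet> N t = 0" "s \<in> I"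
    and "(X has_vector_derivative X') (at s)" "X s = a *\<^sub>R T s + b *\<^sub>R N s + c *\<^sub>R B s"
  shows "X' \<bullet> N s = \<kappa> s * a - \<tau> s * c"
  using orthogonal_on_imp_inner_derivative_eq_0[OF open_I assms(2,1,3) N_derivative[OF assms(2)]]
    inner_frame_combination(2)[OF assms(2)] assms(4)
  by simp

lemma partner_has_vector_derivative:
  assumes I: "is_interval I" "0 \<in> I" and V: "continuous_on I V" and s: "s \<in> I"
    and V_s: "V s = u *\<^sub>R T s + v *\<^sub>R N s + w *\<^sub>R B s"
    and lam: "(lam has_real_derivative l) (at s)"
  shows "((\<lambda>t. oint 0 t V + lam t *\<^sub>R N t) has_vector_derivative
           (u - lam s * \<kappa> s) *\<^sub>R T s + (v + l) *\<^sub>R N s + (w + lam s * \<tau> s) *\<^sub>R B s) (at s)"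
proof -
  have "((\<lambda>t. oint 0 t V + lam t *\<^sub>R N t) has_vector_derivative
          V s + (lam s *\<^sub>R (- \<kappa> s *\<^sub>R T s + \<tau> s *\<^sub>R B s) + l *\<^sub>R N s)) (at s)"
    using lam oint_has_vector_derivative[OF open_I I V s] N_derivative[OF s]
    by (intro has_vector_derivative_add has_vector_derivative_scaleR)
      (simp_all add: has_real_derivative_iff_has_vector_derivative)
  then show ?thesis
    by (simp add: V_s algebra_simps)
qed

end

theorem mainTheorem1:
  fixes I :: "real set"
    and \<gamma> T N B :: "real \<Rightarrow> real^3"
    and \<kappa> \<tau> u v w lam :: "real \<Rightarrow> real"
    and V \<beta> :: "real \<Rightarrow> real^3"
  assumes I: "open I" "is_interval I" "0 \<in> I"
    and frenet_T: "\<And>s. s \<in> I \<Longrightarrow> (\<gamma> has_vector_derivative T s) (at s)"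
    and unit_T: "\<And>s. s \<in> I \<Longrightarrow> norm (T s) = 1"
    and unit_N: "\<And>s. s \<in> I \<Longrightarrow> norm (N s) = 1"
    and orth_TN: "\<And>s. s \<in> I \<Longrightarrow> T s \<bullet> N s = 0"
    and B_def: "\<And>s. s \<in> I \<Longrightarrow> B s = cross3 (T s) (N s)"
    and kappa_pos: "\<And>s. s \<in> I \<Longrightarrow> \<kappa> s > 0"
    and frenet1: "\<And>s. s \<in> I \<Longrightarrow> (T has_vector_derivative (\<kappa> s *\<^sub>R N s)) (at s)"
    and frenet2: "\<And>s. s \<in> I \<Longrightarrow>
                    (N has_vector_derivative (- \<kappa> s *\<^sub>R T s + \<tau> s *\<^sub>R B s)) (at s)"
    and frenet3: "\<And>s. s \<in> I \<Longrightarrow> (B has_vector_derivative (- \<tau> s *\<^sub>R N s)) (at s)"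
    and diff_u: "\<And>s. s \<in> I \<Longrightarrow> u differentiable (at s)"
    and diff_v: "\<And>s. s \<in> I \<Longrightarrow> v differentiable (at s)"
    and diff_w: "\<And>s. s \<in> I \<Longrightarrow> w differentiable (at s)"
    and unit_uvw: "\<And>s. s \<in> I \<Longrightarrow> (u s)\<^sup>2 + (v s)\<^sup>2 + (w s)\<^sup>2 = 1"
    and V_def: "\<And>s. V s = u s *\<^sub>R T s + v s *\<^sub>R N s + w s *\<^sub>R B s"
    and diff_lambda: "\<And>s. s \<in> I \<Longrightarrow> lam differentiable (at s)"
    and beta_def: "\<And>s. \<beta> s = oint 0 s V + lam s *\<^sub>R N s"
    and beta_d1: "\<And>s. s \<in> I \<Longrightarrow> \<beta> differentiable (at s)"
    and beta_d2: "\<And>s. s \<in> I \<Longrightarrow>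
                    (\<lambda>t. vector_derivative \<beta> (at t)) differentiable (at s)"
    and beta_curv: "\<And>s. s \<in> I \<Longrightarrow>
                    cross3 (vector_derivative \<beta> (at s))
                           (vector_derivative (\<lambda>t. vector_derivative \<beta> (at t)) (at s)) \<noteq> 0"
  shows "(\<forall>s\<in>I. frenet_binormal \<beta> s = N s \<or> frenet_binormal \<beta> s = - N s)
         \<longleftrightarrow> ((\<forall>s\<in>I. u s * \<kappa> s - w s * \<tau> s = lam s * ((\<kappa> s)\<^sup>2 + (\<tau> s)\<^sup>2))
              \<and> (\<forall>s\<in>I. (lam has_real_derivative (- v s)) (at s)))"
proof -
  interpret frenet_frame I T N B \<kappa> \<tau>
    using I(1) unit_T unit_N orth_TN B_def frenet1 frenet2 frenet3 by unfold_locales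
  define \<beta>' where "\<beta>' = (\<lambda>t. vector_derivative \<beta> (at t))"
  define \<beta>'' where "\<beta>'' = (\<lambda>t. vector_derivative \<beta>' (at t))"
  have V_continuous: "continuous_on I V"
    unfolding V_def[abs_def] using diff_u diff_v diff_w
    by (intro continuous_on_frame_combination) (auto intro: differentiable_imp_continuous_within)
  have \<beta>': "\<beta>' s = (u s - lam s * \<kappa> s) *\<^sub>R T s + (v s + deriv lam s) *\<^sub>R N s
                      + (w s + lam s * \<tau> s) *\<^sub>R B s" if "s \<in> I" for s
    using partner_has_vector_derivative[OF I(2,3) V_continuous that V_def[of s]
        iffD2[OF DERIV_deriv_iff_real_differentiable diff_lambda[OF that]]]
    by (simp add: \<beta>'_def beta_def[abs_def] vector_derivative_at)
  have binormal_iff: "frenet_binormal \<beta> s = N s \<or> frenet_binormal \<beta> s = - N s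
                        \<longleftrightarrow> \<beta>' s \<bullet> N s = 0 \<and> \<beta>'' s \<bullet> N s = 0" if "s \<in> I" for s
    using sgn_cross3_eq_pm_iff[OF unit_N beta_curv, OF that that]
    by (simp add: frenet_binormal_eq_sgn \<beta>'_def \<beta>''_def)
  have \<beta>''_N: "\<beta>'' s \<bullet> N s = \<kappa> s * (u s - lam s * \<kappa> s) - \<tau> s * (w s + lam s * \<tau> s)"
    if "\<forall>t\<in>I. \<beta>' t \<bullet> N t = 0" "s \<in> I" for s
  proof (rule normal_component_of_derivative[OF that _ \<beta>'[OF that(2)]])
    show "(\<beta>' has_vector_derivative \<beta>'' s) (at s)"
      using beta_d2[OF that(2)] by (simp add: \<beta>''_def \<beta>'_def vector_derivative_works)
  qed
  have lam_deriv_iff: "(lam has_real_derivative - v s) (at s) \<longleftrightarrow> \<beta>' s \<bullet> N s = 0"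
    if "s \<in> I" for s
    using has_real_derivative_iff_deriv_eq[OF diff_lambda[OF that]]
      inner_frame_combination(1)[OF that]
    by (auto simp: \<beta>'[OF that])
  show ?thesis
    using binormal_iff \<beta>''_N lam_deriv_iff
    by (auto simp: algebra_simps power2_eq_square)
qed

end
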